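(* Fix $r\ge0$, $n\ge0$. Let $\pi\in B_n$ be an involution with $b$ barred fixed points and $d$ barred two-cycles, and let $D=P_d^r(\pi)$. Then \[ ev(D)=d,\qquad ov(D)=b+d. \]
   Context: Partitions are identified with Young diagrams in English notation: cell $(k,l)$ lies in row $k$ (from the top) and column $l$ (from the left). A domino is a set of two cells sharing an edge (vertical if in one column). $\delta_r=(r,r-1,\dots,1)$; $\mathcal P_r(n)$ is the set of partitions with 2-core $\delta_r$ and size $|\delta_r|+2n$. A standard domino tableau (SDT) of shape $\lambda\in\mathcal P_r(n)$ is a chain $\delta_r=\lambda^0\subset\cdots\subset\lambda^n=\lambda$ with each $\lambda^k/\lambda^{k-1}$ a domino. $ov(D)$ (resp. $ev(D)$) is the number of vertical dominoes of $D$ in odd-numbered (resp. even-numbered) columns. $B_n$ is the set of words $\pi=\pi_1\cdots\pi_n$ in letters $\{1,\dots,n,\bar1,\dots,\bar n\}$ in which each $k\in[n]$ occurs exactly once, barred or unbarred. $\pi$ is an involution if for each $k$: $\pi_k=k$ (fixed point), $\pi_k=\bar k$ (barred fixed point), or for some $l\ne k$, $\pi_k=l,\pi_l=k$ (two-cycle) or $\pi_k=\bar l,\pi_l=\bar k$ (barred two-cycle). Growth diagram: $M(i,j)=1$ if $\pi_i=j$, $-1$ if $\pi_i=\bar j$, $0$ otherwise. Partitions $\lambda_{(i,j)}$, $1\le i,j\le n+1$, with $\lambda_{(1,j)}=\lambda_{(i,1)}=\delta_r$; for $i,j\in[n]$, with $\lambda=\lambda_{(i,j)},\mu=\lambda_{(i+1,j)},\nu=\lambda_{(i,j+1)}$,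 $\rho=\lambda_{(i+1,j+1)}$ is: (1) if $M(i,j)=1$ (then $\lambda=\mu=\nu$), $\lambda$ with two cells appended to its first row; (2) if $M(i,j)=-1$ (then $\lambda=\mu=\nu$), $\lambda$ with two cells appended to its first column; (3) if $M(i,j)=0$ and $\lambda=\mu$ or $\lambda=\nu$, the largest of $\lambda,\mu,\nu$; (4) otherwise, with dominoes $\gamma=\nu/\lambda$, $\gamma'=\mu/\lambda$: if disjoint, $\lambda\cup\gamma\cup\gamma'$; if they share exactly the cell $(k,l)$, $\lambda\cup\gamma\cup\gamma'\cup\{(k+1,l+1)\}$; if $\gamma=\gamma'$ vertical in column $l$, $\lambda\cup\gamma$ with two cells appended at the bottom of column $l+1$; if $\gamma=\gamma'$ horizontal in row $k$, $\lambda\cup\gamma$ with two cells appended at the end of row $k+1$. Consecutive partitions in the last row/column differ by one domino. $P_d^r(\pi)$ is the SDT given by the chain $\lambda_{(n+1,1)}\subset\cdots\subset\lambda_{(n+1,n+1)}$. *)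

theory Defs
  imports Main
begin

text \<open>Cells are pairs (row, column), both 1-based (English notation).
  A partition is identified with its Young diagram, a finite set of cells.\<close>

type_synonym cell = "nat \<times> nat"
type_synonym diagram = "cell set"

definition staircase :: "nat \<Rightarrow> diagram" where
  "staircase r = {(k, l). 1 \<le> k \<and> 1 \<le> l \<and> k + l \<le> r + 1}"

definition row_len :: "diagram \<Rightarrow> nat \<Rightarrow> nat" where
  "row_len S k = card {l. (k, l) \<in> S}"

definition col_len :: "diagram \<Rightarrow> nat \<Rightarrow> nat" where
  "col_len S l = card {k. (k, l) \<in> S}"

definition vertical_domino :: "cell set \<Rightarrow> bool" where
  "vertical_domino D \<longleftrightarrow> (\<exists>k l. D = {(k, l), (Suc k, l)})"

definition horizontal_domino :: "cell set \<Rightarrow> bool" where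
  "horizontal_domino D \<longleftrightarrow> (\<exists>k l. D = {(k, l), (k, Suc l)})"

definition vertical_in_col :: "cell set \<Rightarrow> nat \<Rightarrow> bool" where
  "vertical_in_col D l \<longleftrightarrow> (\<exists>k. D = {(k, l), (Suc k, l)})"

definition horizontal_in_row :: "cell set \<Rightarrow> nat \<Rightarrow> bool" where
  "horizontal_in_row D k \<longleftrightarrow> (\<exists>l. D = {(k, l), (k, Suc l)})"

text \<open>Signed words: letter j is encoded by the integer j, letter bar j by -j.
  A word pi_1...pi_n is a function p with p i the i-th letter for i in [n] (0 elsewhere).\<close>

definition signed_perms :: "nat \<Rightarrow> (nat \<Rightarrow> int) set" where
  "signed_perms n = {p. (\<forall>i. i \<notin> {1..n} \<longrightarrow> p i = 0)
      \<and> bij_betw (\<lambda>i. nat \<bar>p i\<bar>) {1..n} {1..n}}"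

definition is_involution :: "nat \<Rightarrow> (nat \<Rightarrow> int) \<Rightarrow> bool" where
  "is_involution n p \<longleftrightarrow> (\<forall>k\<in>{1..n}.
      p k = int k \<or> p k = - int k \<or>
      (\<exists>l\<in>{1..n}. l \<noteq> k \<and>
          ((p k = int l \<and> p l = int k) \<or> (p k = - int l \<and> p l = - int k))))"

definition barred_fixed_points :: "nat \<Rightarrow> (nat \<Rightarrow> int) \<Rightarrow> nat" where
  "barred_fixed_points n p = card {k\<in>{1..n}. p k = - int k}"

definition barred_two_cycles :: "nat \<Rightarrow> (nat \<Rightarrow> int) \<Rightarrow> nat" where
  "barred_two_cycles n p = card {{k, l} | k l. k \<in> {1..n} \<and> l \<in> {1..n} \<and> k \<noteq> l
      \<and> p k = - int l \<and> p l = - int k}"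

definition Mentry :: "(nat \<Rightarrow> int) \<Rightarrow> nat \<Rightarrow> nat \<Rightarrow> int" where
  "Mentry p i j = (if p i = int j then 1 else if p i = - int j then -1 else 0)"

text \<open>Local rule: given M(i,j)=m and lam = lambda(i,j), mu = lambda(i+1,j),
  nu = lambda(i,j+1), compute rho = lambda(i+1,j+1).\<close>
definition local_rule :: "int \<Rightarrow> diagram \<Rightarrow> diagram \<Rightarrow> diagram \<Rightarrow> diagram" where
  "local_rule m lam mu nu =
    (if m = 1 then lam \<union> {(1, row_len lam 1 + 1), (1, row_len lam 1 + 2)}
     else if m = -1 then lam \<union> {(col_len lam 1 + 1, 1), (col_len lam 1 + 2, 1)}
     else if lam = mu \<or> lam = nu then (if lam = mu then nu else mu)
     else (let g = nu - lam; g' = mu - lam in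
       if g \<inter> g' = {} then lam \<union> g \<union> g'
       else if (\<exists>c. g \<inter> g' = {c})
         then (let (k, l) = (THE c. g \<inter> g' = {c}) in lam \<union> g \<union> g' \<union> {(Suc k, Suc l)})
       else if g = g' \<and> vertical_domino g
         then (let l = (THE l. vertical_in_col g l); S = lam \<union> g in
               S \<union> {(col_len S (Suc l) + 1, Suc l), (col_len S (Suc l) + 2, Suc l)})
       else if g = g' \<and> horizontal_domino g
         then (let k = (THE k. horizontal_in_row g k); S = lam \<union> g in
               S \<union> {(Suc k, row_len S (Suc k) + 1), (Suc k, row_len S (Suc k) + 2)})
       else undefined))"

text \<open>grow r p i j = lambda_(i,j) for 1 <= i,j; boundary (i = 1 or j = 1) is delta_r.\<close>
fun grow :: "nat \<Rightarrow> (nat \<Rightarrow> int) \<Rightarrow> nat \<Rightarrow> nat \<Rightarrow> diagram" where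
  "grow r p (Suc (Suc i)) (Suc (Suc j)) =
     local_rule (Mentry p (Suc i) (Suc j))
       (grow r p (Suc i) (Suc j)) (grow r p (Suc (Suc i)) (Suc j)) (grow r p (Suc i) (Suc (Suc j)))"
| "grow r p _ _ = staircase r"

text \<open>The domino tableau P_d^r(pi), as the chain of partitions
  lambda_(n+1,1), ..., lambda_(n+1,n+1).\<close>
definition Pd :: "nat \<Rightarrow> nat \<Rightarrow> (nat \<Rightarrow> int) \<Rightarrow> diagram list" where
  "Pd r n p = map (\<lambda>j. grow r p (n + 1) j) [1..<n + 2]"

definition ov :: "diagram list \<Rightarrow> nat" where
  "ov D = card {k. 0 < k \<and> k < length D \<and>
      (\<exists>l. odd l \<and> vertical_in_col (D ! k - D ! (k - 1)) l)}"

definition ev :: "diagram list \<Rightarrow> nat" where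
  "ev D = card {k. 0 < k \<and> k < length D \<and>
      (\<exists>l. even l \<and> vertical_in_col (D ! k - D ! (k - 1)) l)}"

end

theory Submission
  imports Defs
begin

text \<open>Count even vertical dominoes on the horizontal edges of the growth diagram and odd vertical
  dominoes on its vertical edges. Across every square the local rule conserves this count, except
  that an entry \<open>-1\<close> adds one. The first row and column carry only \<open>\<delta>\<^sub>r\<close>, and for an
  involution the diagram is symmetric, so the last column carries the odd dominoes of the last row.
  Summing over all squares gives \<open>ev(D) + ov(D) = b + 2d\<close>, the number of barred letters.

  Second, the number of cells in odd columns minus the number in even columns changes by \<open>\<plusminus>2\<close> with
  each vertical domino and is unchanged by horizontal ones. Along the last row it grows by
  \<open>2(ov(D) - ev(D))\<close>. On the diagonal the square is symmetric, and it grows by exactly 2 at each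
  barred fixed point. Comparing the two paths gives \<open>ov(D) - ev(D) = b\<close>.\<close>

section \<open>Young diagrams\<close>

definition young :: "diagram \<Rightarrow> bool" where
  "young S \<longleftrightarrow> finite S \<and> (\<forall>k l. (k, l) \<in> S \<longrightarrow> 1 \<le> k \<and> 1 \<le> l \<and>
      (\<forall>k' l'. 1 \<le> k' \<and> k' \<le> k \<and> 1 \<le> l' \<and> l' \<le> l \<longrightarrow> (k', l') \<in> S))"

lemma young_finite: "young S \<Longrightarrow> finite S"
  unfolding young_def by blast

lemma young_pos: "young S \<Longrightarrow> (k, l) \<in> S \<Longrightarrow> 1 \<le> k \<and> 1 \<le> l"
  unfolding young_def by blast

lemma young_down:
  "young S \<Longrightarrow> (k, l) \<in> S \<Longrightarrow> 1 \<le> k' \<Longrightarrow> k' \<le> k \<Longrightarrow> 1 \<le> l' \<Longrightarrow> l' \<le> l \<Longrightarrow> (k', l') \<in> S"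
  unfolding young_def by blast

lemma young_Un: "young A \<Longrightarrow> young B \<Longrightarrow> young (A \<union> B)"
  unfolding young_def by blast

lemma young_extend:
  assumes "young S" "finite C" "\<And>k l. (k, l) \<in> C \<Longrightarrow> 1 \<le> k \<and> 1 \<le> l"
    and "\<And>k l k' l'. (k, l) \<in> C \<Longrightarrow> 1 \<le> k' \<Longrightarrow> k' \<le> k \<Longrightarrow> 1 \<le> l' \<Longrightarrow> l' \<le> l \<Longrightarrow>
          (k', l') \<in> S \<union> C"
  shows "young (S \<union> C)"
  using assms unfolding young_def by blast

lemma young_staircase: "young (staircase r)"
proof -
  have "staircase r \<subseteq> {1..r} \<times> {1..r}" unfolding staircase_def by auto
  then have "finite (staircase r)" using finite_subset by blast
  then show ?thesis unfolding young_def staircase_def by auto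
qed

lemma young_col_mem: "young S \<Longrightarrow> (k, l) \<in> S \<longleftrightarrow> 1 \<le> k \<and> k \<le> col_len S l"
proof -
  assume S: "young S"
  let ?C = "{k. (k, l) \<in> S}"
  have fin: "finite ?C"
    using finite_imageI[OF young_finite[OF S], of fst] by (rule finite_subset[rotated]) force
  have "?C = {1..card ?C}"
  proof (cases "?C = {}")
    case False
    define M where "M = Max ?C"
    have M: "(M, l) \<in> S" using Max_in[OF fin False] M_def by simp
    have "?C \<subseteq> {1..M}" using Max_ge[OF fin] young_pos[OF S] M_def by auto
    moreover have "{1..M} \<subseteq> ?C" using young_down[OF S M] young_pos[OF S M] by auto
    ultimately have "?C = {1..M}" by (rule antisym)
    then show ?thesis by simp
  qed simp
  then show ?thesis unfolding col_len_def by (metis (no_types, lifting) atLeastAtMost_iff mem_Collect_eq)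
qed

lemma young_row_mem: "young S \<Longrightarrow> (k, l) \<in> S \<longleftrightarrow> 1 \<le> l \<and> l \<le> row_len S k"
proof -
  assume S: "young S"
  let ?R = "{l. (k, l) \<in> S}"
  have fin: "finite ?R"
    using finite_imageI[OF young_finite[OF S], of snd] by (rule finite_subset[rotated]) force
  have "?R = {1..card ?R}"
  proof (cases "?R = {}")
    case False
    define M where "M = Max ?R"
    have M: "(k, M) \<in> S" using Max_in[OF fin False] M_def by simp
    have "?R \<subseteq> {1..M}" using Max_ge[OF fin] young_pos[OF S] M_def by auto
    moreover have "{1..M} \<subseteq> ?R" using young_down[OF S M] young_pos[OF S M] by auto
    ultimately have "?R = {1..M}" by (rule antisym)
    then show ?thesis by simp
  qed simp
  then show ?thesis unfolding row_len_def by (metis (no_types, lifting) atLeastAtMost_iff mem_Collect_eq)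
qed

lemma young_add_row_domino:
  assumes S: "young S" and k: "1 \<le> k"
    and above: "\<And>i. 1 \<le> i \<Longrightarrow> i < k \<Longrightarrow> (i, row_len S k + 2) \<in> S"
  shows "young (S \<union> {(k, row_len S k + 1), (k, row_len S k + 2)})"
proof (rule young_extend[OF S])
  fix a b k' l'
  assume ab: "(a, b) \<in> {(k, row_len S k + 1), (k, row_len S k + 2)}"
    and k': "1 \<le> k'" "k' \<le> a" and l': "1 \<le> l'" "l' \<le> b"
  show "(k', l') \<in> S \<union> {(k, row_len S k + 1), (k, row_len S k + 2)}"
  proof (cases "k' < k")
    case True
    then show ?thesis using young_down[OF S above[OF k'(1) True], of k' l'] ab k'(1) l' by auto
  next
    case False
    then have "k' = k" using ab k' by auto
    then show ?thesis using young_row_mem[OF S, of k l'] ab l' by (cases "l' \<le> row_len S k") auto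
  qed
qed (use k in auto)

lemma young_add_col_domino:
  assumes S: "young S" and l: "1 \<le> l"
    and left: "\<And>j. 1 \<le> j \<Longrightarrow> j < l \<Longrightarrow> (col_len S l + 2, j) \<in> S"
  shows "young (S \<union> {(col_len S l + 1, l), (col_len S l + 2, l)})"
proof (rule young_extend[OF S])
  fix a b k' l'
  assume ab: "(a, b) \<in> {(col_len S l + 1, l), (col_len S l + 2, l)}"
    and k': "1 \<le> k'" "k' \<le> a" and l': "1 \<le> l'" "l' \<le> b"
  show "(k', l') \<in> S \<union> {(col_len S l + 1, l), (col_len S l + 2, l)}"
  proof (cases "l' < l")
    case True
    then show ?thesis using young_down[OF S left[OF l'(1) True], of k' l'] ab k' l'(1) by auto
  next
    case False
    then have "l' = l" using ab l' by auto
    then show ?thesis using young_col_mem[OF S, of k' l] ab k' by (cases "k' \<le> col_len S l") auto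
  qed
qed (use l in auto)

section \<open>Domino steps\<close>

definition domino_step :: "diagram \<Rightarrow> diagram \<Rightarrow> bool" where
  "domino_step X Y \<longleftrightarrow> X \<subseteq> Y \<and> (Y - X = {} \<or> vertical_domino (Y - X) \<or> horizontal_domino (Y - X))"

lemma domino_step_refl: "domino_step X X"
  unfolding domino_step_def by simp

lemma domino_step_vertical: "X \<subseteq> Y \<Longrightarrow> Y - X = {(k, l), (Suc k, l)} \<Longrightarrow> domino_step X Y"
  unfolding domino_step_def vertical_domino_def by blast

lemma domino_step_horizontal: "X \<subseteq> Y \<Longrightarrow> Y - X = {(k, l), (k, Suc l)} \<Longrightarrow> domino_step X Y"
  unfolding domino_step_def horizontal_domino_def by blast

lemma domino_step_cases:
  assumes "domino_step X Y" "X \<noteq> Y"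
  obtains k l where "Y - X = {(k, l), (Suc k, l)} \<or> Y - X = {(k, l), (k, Suc l)}"
  using assms unfolding domino_step_def vertical_domino_def horizontal_domino_def by blast

lemma domino_corners_agree:
  assumes mu: "young mu" and nu: "young nu"
    and N: "nu - lam = {(k, l), (Suc k, l)} \<or> nu - lam = {(k, l), (k, Suc l)}"
    and M: "mu - lam = {(k', l'), (Suc k', l')} \<or> mu - lam = {(k', l'), (k', Suc l')}"
    and meet: "(nu - lam) \<inter> (mu - lam) \<noteq> {}"
  shows "(k', l') = (k, l)"
proof -
  have N_corner: "(k, l) \<in> nu - lam" and M_corner: "(k', l') \<in> mu - lam"
    using N M by auto
  have N_cells: "nu - lam \<subseteq> {(a, b). k \<le> a \<and> l \<le> b}"
    using N by (elim disjE) simp_all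
  have M_cells: "mu - lam \<subseteq> {(a, b). k' \<le> a \<and> l' \<le> b}"
    using M by (elim disjE) simp_all
  obtain a b where ab: "(a, b) \<in> nu - lam" "(a, b) \<in> mu - lam" using meet by auto
  have "1 \<le> k" "1 \<le> l" "1 \<le> k'" "1 \<le> l'"
    using young_pos[OF nu, of k l] young_pos[OF mu, of k' l'] N_corner M_corner by auto
  moreover have "k \<le> a" "l \<le> b" "k' \<le> a" "l' \<le> b" using ab N_cells M_cells by auto
  ultimately have "(k, l) \<in> mu" "(k', l') \<in> nu"
    using young_down[OF mu, of a b k l] young_down[OF nu, of a b k' l'] ab by auto
  then have "(k, l) \<in> mu - lam" "(k', l') \<in> nu - lam" using N_corner M_corner by auto
  then have "k' \<le> k \<and> l' \<le> l" "k \<le> k' \<and> l \<le> l'" using N_cells M_cells by blast+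
  then show ?thesis by simp
qed

definition vert_even :: "diagram \<Rightarrow> diagram \<Rightarrow> int" where
  "vert_even X Y = of_bool (\<exists>l. even l \<and> vertical_in_col (Y - X) l)"

definition vert_odd :: "diagram \<Rightarrow> diagram \<Rightarrow> int" where
  "vert_odd X Y = of_bool (\<exists>l. odd l \<and> vertical_in_col (Y - X) l)"

lemma vert_counts_vertical:
  "Y - X = {(k, l), (Suc k, l)} \<Longrightarrow> vert_even X Y = of_bool (even l) \<and> vert_odd X Y = of_bool (odd l)"
  unfolding vert_even_def vert_odd_def vertical_in_col_def by (auto simp: doubleton_eq_iff)

lemma vert_counts_horizontal:
  "Y - X = {(k, l), (k, Suc l)} \<Longrightarrow> vert_even X Y = 0 \<and> vert_odd X Y = 0"
  unfolding vert_even_def vert_odd_def vertical_in_col_def by (auto simp: doubleton_eq_iff)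

lemma vert_counts_empty: "Y - X = {} \<Longrightarrow> vert_even X Y = 0 \<and> vert_odd X Y = 0"
  unfolding vert_even_def vert_odd_def vertical_in_col_def by auto

definition parity_content :: "diagram \<Rightarrow> int" where
  "parity_content X = (\<Sum>c\<in>X. if odd (snd c) then 1 else -1)"

lemma parity_content_step:
  assumes Y: "finite Y" and XY: "domino_step X Y"
  shows "parity_content Y - parity_content X = 2 * (vert_odd X Y - vert_even X Y)"
proof -
  have split: "parity_content Y = parity_content (Y - X) + parity_content X"
    using XY unfolding parity_content_def domino_step_def by (intro sum.subset_diff[OF _ Y]) blast
  consider "Y - X = {}" | k l where "Y - X = {(k, l), (Suc k, l)}"
    | k l where "Y - X = {(k, l), (k, Suc l)}"
    using XY unfolding domino_step_def vertical_domino_def horizontal_domino_def by blast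
  then show ?thesis
  proof cases
    case 1
    then show ?thesis using split vert_counts_empty[OF 1] by (simp add: parity_content_def 1)
  next
    case (2 k l)
    then show ?thesis using split vert_counts_vertical[OF 2] by (simp add: parity_content_def)
  next
    case (3 k l)
    then show ?thesis using split vert_counts_horizontal[OF 3] by (simp add: parity_content_def)
  qed
qed

section \<open>The local rule\<close>

lemma local_rule_sym: "local_rule m lam mu nu = local_rule m lam nu mu"
proof (cases "m = 1 \<or> m = -1 \<or> lam = mu \<or> lam = nu")
  case True
  then show ?thesis by (auto simp: local_rule_def)
next
  case False
  show ?thesis
  proof (cases "nu - lam = mu - lam")
    case True
    then show ?thesis using False by (simp add: local_rule_def)
  next
    case ne: False
    have "lam \<union> (nu - lam) \<union> (mu - lam) = lam \<union> (mu - lam) \<union> (nu - lam)" by blast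
    then show ?thesis using False ne
      unfolding local_rule_def Let_def by (simp add: Int_commute)
  qed
qed

lemma local_rule_plus:
  "local_rule 1 lam mu nu = lam \<union> {(1, row_len lam 1 + 1), (1, row_len lam 1 + 2)}"
  by (simp add: local_rule_def)

lemma local_rule_minus:
  "local_rule (-1) lam mu nu = lam \<union> {(col_len lam 1 + 1, 1), (col_len lam 1 + 2, 1)}"
  by (simp add: local_rule_def)

lemma local_rule_unchanged_below: "local_rule 0 lam lam nu = nu"
  by (simp add: local_rule_def)

lemma local_rule_disjoint:
  assumes "lam \<noteq> mu" "lam \<noteq> nu" "(nu - lam) \<inter> (mu - lam) = {}"
  shows "local_rule 0 lam mu nu = lam \<union> (nu - lam) \<union> (mu - lam)"
  using assms by (simp add: local_rule_def)

lemma local_rule_corner: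
  assumes "lam \<noteq> mu" "lam \<noteq> nu" "(nu - lam) \<inter> (mu - lam) = {(k, l)}"
  shows "local_rule 0 lam mu nu = lam \<union> (nu - lam) \<union> (mu - lam) \<union> {(Suc k, Suc l)}"
  using assms by (simp add: local_rule_def)

lemma local_rule_vertical:
  assumes "lam \<noteq> mu" "nu - lam = {(k, l), (Suc k, l)}" "mu - lam = {(k, l), (Suc k, l)}"
  defines "S \<equiv> lam \<union> {(k, l), (Suc k, l)}"
  shows "local_rule 0 lam mu nu = S \<union> {(col_len S (Suc l) + 1, Suc l), (col_len S (Suc l) + 2, Suc l)}"
proof -
  have "(THE l'. vertical_in_col {(k, l), (Suc k, l)} l') = l"
    by (rule the_equality) (auto simp: vertical_in_col_def doubleton_eq_iff)
  moreover have "lam \<noteq> nu" "vertical_domino {(k, l), (Suc k, l)}"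
    using assms(2) by (auto simp: vertical_domino_def)
  ultimately show ?thesis
    using assms by (simp add: local_rule_def Let_def doubleton_eq_iff)
qed

lemma local_rule_horizontal:
  assumes "lam \<noteq> mu" "nu - lam = {(k, l), (k, Suc l)}" "mu - lam = {(k, l), (k, Suc l)}"
  defines "S \<equiv> lam \<union> {(k, l), (k, Suc l)}"
  shows "local_rule 0 lam mu nu = S \<union> {(Suc k, row_len S (Suc k) + 1), (Suc k, row_len S (Suc k) + 2)}"
proof -
  have "(THE k'. horizontal_in_row {(k, l), (k, Suc l)} k') = k"
    by (rule the_equality) (auto simp: horizontal_in_row_def doubleton_eq_iff)
  moreover have "lam \<noteq> nu" "horizontal_domino {(k, l), (k, Suc l)}"
    "\<not> vertical_domino {(k, l), (k, Suc l)}"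
    using assms(2) by (auto simp: horizontal_domino_def vertical_domino_def doubleton_eq_iff)
  ultimately show ?thesis
    using assms by (simp add: local_rule_def Let_def doubleton_eq_iff)
qed

text \<open>For a square with \<open>lam = \<lambda>(i,j)\<close>, \<open>mu = \<lambda>(i+1,j)\<close>, \<open>nu = \<lambda>(i,j+1)\<close> and
  \<open>rho = \<lambda>(i+1,j+1)\<close>: count even vertical dominoes on the horizontal edges and odd ones on the
  vertical edges.\<close>
definition square_balanced :: "int \<Rightarrow> diagram \<Rightarrow> diagram \<Rightarrow> diagram \<Rightarrow> diagram \<Rightarrow> bool" where
  "square_balanced m lam mu nu rho \<longleftrightarrow>
     vert_even mu rho + vert_odd nu rho = vert_even lam nu + vert_odd lam mu + of_bool (m = -1)"

text \<open>The balance is required in both orientations, which makes the notion symmetric in \<open>mu\<close> and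
  \<open>nu\<close> like the local rule itself; the last clause is what the diagonal of a symmetric diagram needs.\<close>
definition good_square :: "int \<Rightarrow> diagram \<Rightarrow> diagram \<Rightarrow> diagram \<Rightarrow> diagram \<Rightarrow> bool" where
  "good_square m lam mu nu rho \<longleftrightarrow> young rho \<and> domino_step mu rho \<and> domino_step nu rho \<and>
     square_balanced m lam mu nu rho \<and> square_balanced m lam nu mu rho \<and>
     (mu = nu \<longrightarrow> vert_odd lam mu - vert_even lam mu + vert_odd mu rho - vert_even mu rho = of_bool (m = -1))"

lemma good_square_swap: "good_square m lam mu nu rho \<longleftrightarrow> good_square m lam nu mu rho"
  unfolding good_square_def by auto

lemma good_square_plus:
  assumes lam: "young lam"
  shows "good_square 1 lam lam lam (local_rule 1 lam lam lam)"
proof -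
  define a where "a = row_len lam 1"
  let ?H = "{(1, Suc a), (1, Suc (Suc a))}"
  have rho: "local_rule 1 lam lam lam = lam \<union> ?H"
    by (simp add: local_rule_plus a_def)
  have "young (lam \<union> ?H)"
    using young_add_row_domino[OF lam] by (simp add: a_def)
  moreover have new: "(lam \<union> ?H) - lam = ?H"
    using young_row_mem[OF lam] by (auto simp: a_def)
  ultimately show ?thesis
    using vert_counts_horizontal[OF new] vert_counts_empty[of lam lam]
      domino_step_horizontal[OF Un_upper1 new]
    unfolding good_square_def square_balanced_def rho by simp
qed

lemma good_square_minus:
  assumes lam: "young lam"
  shows "good_square (-1) lam lam lam (local_rule (-1) lam lam lam)"
proof -
  define a where "a = col_len lam 1"
  let ?V = "{(Suc a, 1), (Suc (Suc a), 1)}"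
  have rho: "local_rule (-1) lam lam lam = lam \<union> ?V"
    by (simp add: local_rule_minus a_def)
  have "young (lam \<union> ?V)"
    using young_add_col_domino[OF lam] by (simp add: a_def)
  moreover have new: "(lam \<union> ?V) - lam = ?V"
    using young_col_mem[OF lam] by (auto simp: a_def)
  ultimately show ?thesis
    using vert_counts_vertical[OF new] vert_counts_empty[of lam lam]
      domino_step_vertical[OF Un_upper1 new]
    unfolding good_square_def square_balanced_def rho by simp
qed

lemma good_square_unchanged_below:
  assumes "young nu" "domino_step lam nu"
  shows "good_square 0 lam lam nu (local_rule 0 lam lam nu)"
  using assms vert_counts_empty[of nu nu] vert_counts_empty[of lam lam]
  by (auto simp: good_square_def square_balanced_def local_rule_unchanged_below domino_step_refl)

lemma good_square_disjoint:
  assumes mu: "young mu" and nu: "young nu"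
    and lam_mu: "domino_step lam mu" and lam_nu: "domino_step lam nu"
    and "lam \<noteq> mu" "lam \<noteq> nu" and disj: "(nu - lam) \<inter> (mu - lam) = {}"
  shows "good_square 0 lam mu nu (local_rule 0 lam mu nu)"
proof -
  have sub: "lam \<subseteq> mu" "lam \<subseteq> nu" using lam_mu lam_nu unfolding domino_step_def by auto
  then have rho: "local_rule 0 lam mu nu = mu \<union> nu"
    using local_rule_disjoint[OF assms(5-7)] by auto
  have "mu \<noteq> nu" using disj sub \<open>lam \<noteq> nu\<close> by auto
  moreover have "(mu \<union> nu) - mu = nu - lam" "(mu \<union> nu) - nu = mu - lam" using disj sub by auto
  ultimately show ?thesis
    using young_Un[OF mu nu] lam_mu lam_nu sub
    by (auto simp: rho good_square_def square_balanced_def domino_step_def vert_even_def vert_odd_def)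
qed

lemma good_square_corner:
  assumes lam: "young lam" and mu: "young mu" and nu: "young nu"
    and sub: "lam \<subseteq> mu" "lam \<subseteq> nu"
    and V: "nu - lam = {(k, l), (Suc k, l)}" and H: "mu - lam = {(k, l), (k, Suc l)}"
  shows "good_square 0 lam mu nu (local_rule 0 lam mu nu)"
proof -
  have mu_eq: "mu = lam \<union> {(k, l), (k, Suc l)}" and nu_eq: "nu = lam \<union> {(k, l), (Suc k, l)}"
    using sub V H by blast+
  have out: "(k, l) \<notin> lam" "(Suc k, l) \<notin> lam" "(k, Suc l) \<notin> lam" using V H by blast+
  have pos: "1 \<le> k" "1 \<le> l" using young_pos[OF nu, of k l] nu_eq by auto
  have corner_out: "(Suc k, Suc l) \<notin> lam"
    using young_down[OF lam, of "Suc k" "Suc l" k l] pos out(1) by auto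
  have "lam \<noteq> mu" "lam \<noteq> nu" "(nu - lam) \<inter> (mu - lam) = {(k, l)}" using V H by auto
  then have rho: "local_rule 0 lam mu nu = mu \<union> nu \<union> {(Suc k, Suc l)}"
    using local_rule_corner sub by blast
  have new_mu: "(mu \<union> nu \<union> {(Suc k, Suc l)}) - mu = {(Suc k, l), (Suc k, Suc l)}"
    and new_nu: "(mu \<union> nu \<union> {(Suc k, Suc l)}) - nu = {(k, Suc l), (Suc k, Suc l)}"
    using out corner_out by (auto simp: mu_eq nu_eq)
  have "young (mu \<union> nu \<union> {(Suc k, Suc l)})"
  proof (rule young_extend[OF young_Un[OF mu nu]])
    fix a b k' l' assume "(a, b) \<in> {(Suc k, Suc l)}" "1 \<le> k'" "k' \<le> a" "1 \<le> l'" "l' \<le> b"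
    then show "(k', l') \<in> mu \<union> nu \<union> {(Suc k, Suc l)}"
      using young_down[OF mu, of k "Suc l" k' l'] young_down[OF nu, of "Suc k" l k' l']
      by (cases "k' \<le> k"; cases "l' \<le> l") (auto simp: mu_eq nu_eq)
  qed (use pos in auto)
  moreover have "(k, Suc l) \<in> mu" "(k, Suc l) \<notin> nu" using out(3) by (auto simp: mu_eq nu_eq)
  ultimately show ?thesis
    using vert_counts_horizontal[OF new_mu] vert_counts_vertical[OF new_nu]
      vert_counts_vertical[OF V] vert_counts_horizontal[OF H]
      domino_step_horizontal[OF _ new_mu] domino_step_vertical[OF _ new_nu]
    unfolding good_square_def square_balanced_def rho by auto
qed

lemma good_square_vertical:
  assumes lam: "young lam" and mu: "young mu" and sub: "lam \<subseteq> mu" "lam \<subseteq> nu"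
    and V_nu: "nu - lam = {(k, l), (Suc k, l)}" and V_mu: "mu - lam = {(k, l), (Suc k, l)}"
  shows "good_square 0 lam mu nu (local_rule 0 lam mu nu)"
proof -
  define S where "S = lam \<union> {(k, l), (Suc k, l)}"
  define c where "c = col_len S (Suc l)"
  let ?N = "{(Suc c, Suc l), (Suc (Suc c), Suc l)}"
  have mu_eq: "mu = S" and nu_eq: "nu = S" using sub V_nu V_mu unfolding S_def by blast+
  have S: "young S" using mu mu_eq by simp
  have out: "(k, l) \<notin> lam" using V_mu by blast
  have pos: "1 \<le> k" "1 \<le> l" using young_pos[OF S, of k l] by (auto simp: S_def)
  have "lam \<noteq> mu" using out mu_eq S_def by blast
  then have rho: "local_rule 0 lam mu nu = S \<union> ?N"
    using local_rule_vertical[OF _ V_nu V_mu] unfolding S_def[symmetric] c_def[symmetric] by simp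
  have "c < k"
  proof (rule ccontr)
    assume "\<not> c < k"
    then have "(k, Suc l) \<in> S" using young_col_mem[OF S, of k "Suc l"] pos by (simp add: c_def)
    then have "(k, Suc l) \<in> lam" by (simp add: S_def)
    then show False using young_down[OF lam, of k "Suc l" k l] pos out by simp
  qed
  have "(c + 2, j) \<in> S" if "1 \<le> j" "j < Suc l" for j
    using young_down[OF S, of "Suc k" l "c + 2" j] \<open>c < k\<close> that by (simp add: S_def)
  then have "young (S \<union> ?N)"
    using young_add_col_domino[OF S, of "Suc l"] unfolding c_def[symmetric] by simp
  moreover have new: "(S \<union> ?N) - S = ?N"
    using young_col_mem[OF S, of _ "Suc l"] by (auto simp: c_def)
  ultimately show ?thesis
    using vert_counts_vertical[OF new] vert_counts_vertical[OF V_mu[unfolded mu_eq]]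
      domino_step_vertical[OF Un_upper1 new]
    unfolding good_square_def square_balanced_def mu_eq nu_eq rho[unfolded mu_eq nu_eq] by simp
qed

lemma good_square_horizontal:
  assumes lam: "young lam" and mu: "young mu" and sub: "lam \<subseteq> mu" "lam \<subseteq> nu"
    and H_nu: "nu - lam = {(k, l), (k, Suc l)}" and H_mu: "mu - lam = {(k, l), (k, Suc l)}"
  shows "good_square 0 lam mu nu (local_rule 0 lam mu nu)"
proof -
  define S where "S = lam \<union> {(k, l), (k, Suc l)}"
  define c where "c = row_len S (Suc k)"
  let ?N = "{(Suc k, Suc c), (Suc k, Suc (Suc c))}"
  have mu_eq: "mu = S" and nu_eq: "nu = S" using sub H_nu H_mu unfolding S_def by blast+
  have S: "young S" using mu mu_eq by simp
  have out: "(k, l) \<notin> lam" using H_mu by blast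
  have pos: "1 \<le> k" "1 \<le> l" using young_pos[OF S, of k l] by (auto simp: S_def)
  have "lam \<noteq> mu" using out mu_eq S_def by blast
  then have rho: "local_rule 0 lam mu nu = S \<union> ?N"
    using local_rule_horizontal[OF _ H_nu H_mu] unfolding S_def[symmetric] c_def[symmetric] by simp
  have "c < l"
  proof (rule ccontr)
    assume "\<not> c < l"
    then have "(Suc k, l) \<in> S" using young_row_mem[OF S, of "Suc k" l] pos by (simp add: c_def)
    then have "(Suc k, l) \<in> lam" by (simp add: S_def)
    then show False using young_down[OF lam, of "Suc k" l k l] pos out by simp
  qed
  have "(i, c + 2) \<in> S" if "1 \<le> i" "i < Suc k" for i
    using young_down[OF S, of k "Suc l" i "c + 2"] \<open>c < l\<close> that by (simp add: S_def)
  then have "young (S \<union> ?N)"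
    using young_add_row_domino[OF S, of "Suc k"] unfolding c_def[symmetric] by simp
  moreover have new: "(S \<union> ?N) - S = ?N"
    using young_row_mem[OF S, of "Suc k"] by (auto simp: c_def)
  ultimately show ?thesis
    using vert_counts_horizontal[OF new] vert_counts_horizontal[OF H_mu[unfolded mu_eq]]
      domino_step_horizontal[OF Un_upper1 new]
    unfolding good_square_def square_balanced_def mu_eq nu_eq rho[unfolded mu_eq nu_eq] by simp
qed

lemma good_square_proper:
  assumes lam: "young lam" and mu: "young mu" and nu: "young nu"
    and lam_mu: "domino_step lam mu" and lam_nu: "domino_step lam nu"
    and "lam \<noteq> mu" "lam \<noteq> nu"
  shows "good_square 0 lam mu nu (local_rule 0 lam mu nu)"
proof (cases "(nu - lam) \<inter> (mu - lam) = {}")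
  case True
  then show ?thesis using good_square_disjoint[OF mu nu lam_mu lam_nu assms(6,7)] by simp
next
  case False
  have sub: "lam \<subseteq> mu" "lam \<subseteq> nu" using lam_mu lam_nu unfolding domino_step_def by auto
  obtain k l where N: "nu - lam = {(k, l), (Suc k, l)} \<or> nu - lam = {(k, l), (k, Suc l)}"
    using domino_step_cases[OF lam_nu \<open>lam \<noteq> nu\<close>] by blast
  obtain k' l' where M: "mu - lam = {(k', l'), (Suc k', l')} \<or> mu - lam = {(k', l'), (k', Suc l')}"
    using domino_step_cases[OF lam_mu \<open>lam \<noteq> mu\<close>] by blast
  have "(k', l') = (k, l)" by (rule domino_corners_agree[OF mu nu N M False])
  with M have M: "mu - lam = {(k, l), (Suc k, l)} \<or> mu - lam = {(k, l), (k, Suc l)}" by simp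
  from N M show ?thesis
  proof (elim disjE)
    assume "nu - lam = {(k, l), (Suc k, l)}" "mu - lam = {(k, l), (Suc k, l)}"
    then show ?thesis by (rule good_square_vertical[OF lam mu sub])
  next
    assume "nu - lam = {(k, l), (Suc k, l)}" "mu - lam = {(k, l), (k, Suc l)}"
    then show ?thesis by (rule good_square_corner[OF lam mu nu sub])
  next
    assume "nu - lam = {(k, l), (k, Suc l)}" "mu - lam = {(k, l), (Suc k, l)}"
    then have "good_square 0 lam nu mu (local_rule 0 lam nu mu)"
      by (intro good_square_corner[OF lam nu mu sub(2,1)])
    then show ?thesis by (simp add: good_square_swap local_rule_sym)
  next
    assume "nu - lam = {(k, l), (k, Suc l)}" "mu - lam = {(k, l), (k, Suc l)}"
    then show ?thesis by (rule good_square_horizontal[OF lam mu sub])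
  qed
qed

lemma good_square_local_rule:
  assumes lam: "young lam" and mu: "young mu" and nu: "young nu"
    and lam_mu: "domino_step lam mu" and lam_nu: "domino_step lam nu"
    and m: "m \<in> {-1, 0, 1}" and nonzero: "m \<noteq> 0 \<Longrightarrow> mu = lam \<and> nu = lam"
  shows "good_square m lam mu nu (local_rule m lam mu nu)"
proof -
  consider "m = 1" | "m = -1" | "m = 0" "lam = mu" | "m = 0" "lam = nu" | "m = 0" "lam \<noteq> mu" "lam \<noteq> nu"
    using m by auto
  then show ?thesis
  proof cases
    case 1
    then show ?thesis using nonzero good_square_plus[OF lam] by simp
  next
    case 2
    then show ?thesis using nonzero good_square_minus[OF lam] by simp
  next
    case 3
    then show ?thesis using good_square_unchanged_below[OF nu lam_nu] by simp
  next
    case 4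
    then show ?thesis using good_square_unchanged_below[OF mu lam_mu]
      by (simp add: good_square_swap local_rule_sym)
  next
    case 5
    then show ?thesis using good_square_proper[OF lam mu nu lam_mu lam_nu] by simp
  qed
qed

section \<open>Growth diagrams\<close>

lemma grow_boundary: "i \<le> 1 \<or> j \<le> 1 \<Longrightarrow> grow r p i j = staircase r"
  by (cases "(r, p, i, j)" rule: grow.cases) auto

lemma grow_Suc_Suc:
  "1 \<le> i \<Longrightarrow> 1 \<le> j \<Longrightarrow> grow r p (Suc i) (Suc j) =
     local_rule (Mentry p i j) (grow r p i j) (grow r p (Suc i) j) (grow r p i (Suc j))"
  by (cases i; cases j) auto

definition row_free :: "(nat \<Rightarrow> int) \<Rightarrow> nat \<Rightarrow> nat \<Rightarrow> bool" where
  "row_free p i j \<longleftrightarrow> (\<forall>j'. 1 \<le> j' \<and> j' < j \<longrightarrow> Mentry p i j' = 0)"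

definition col_free :: "(nat \<Rightarrow> int) \<Rightarrow> nat \<Rightarrow> nat \<Rightarrow> bool" where
  "col_free p i j \<longleftrightarrow> (\<forall>i'. 1 \<le> i' \<and> i' < i \<longrightarrow> Mentry p i' j = 0)"

lemma Mentry_cases: "Mentry p i j \<in> {-1, 0, 1}"
  unfolding Mentry_def by auto

lemma Mentry_nonzero_free:
  assumes p: "p \<in> signed_perms n" and j: "1 \<le> j" and M: "Mentry p i j \<noteq> 0"
  shows "row_free p i j \<and> col_free p i j"
proof
  have pi: "nat \<bar>p i\<bar> = j" using M j unfolding Mentry_def by (auto split: if_splits)
  then show "row_free p i j" unfolding row_free_def Mentry_def by auto
  have inj: "inj_on (\<lambda>i. nat \<bar>p i\<bar>) {1..n}" and supp: "\<And>i. p i \<noteq> 0 \<Longrightarrow> i \<in> {1..n}"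
    using p unfolding signed_perms_def bij_betw_def by blast+
  show "col_free p i j" unfolding col_free_def
  proof (intro allI impI)
    fix i' assume i': "1 \<le> i' \<and> i' < i"
    show "Mentry p i' j = 0"
    proof (rule ccontr)
      assume "Mentry p i' j \<noteq> 0"
      then have "nat \<bar>p i'\<bar> = j" using j unfolding Mentry_def by (auto split: if_splits)
      with pi j have "p i \<noteq> 0" "p i' \<noteq> 0" "nat \<bar>p i'\<bar> = nat \<bar>p i\<bar>" by auto
      then have "i' = i" using inj_onD[OF inj] supp by blast
      then show False using i' by simp
    qed
  qed
qed

text \<open>The partition at \<open>(i, j)\<close> only depends on the entries of \<open>M\<close> strictly above and to the
  left; the last two clauses say that an empty row or column segment contributes nothing.\<close>
definition grow_wf :: "nat \<Rightarrow> (nat \<Rightarrow> int) \<Rightarrow> nat \<Rightarrow> nat \<Rightarrow> bool" where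
  "grow_wf r p i j \<longleftrightarrow> young (grow r p i j)
     \<and> domino_step (grow r p (i - 1) j) (grow r p i j) \<and> domino_step (grow r p i (j - 1)) (grow r p i j)
     \<and> (row_free p (i - 1) j \<longrightarrow> grow r p i j = grow r p (i - 1) j)
     \<and> (col_free p i (j - 1) \<longrightarrow> grow r p i j = grow r p i (j - 1))"

lemma good_square_grow_step:
  assumes p: "p \<in> signed_perms n" and ij: "1 \<le> i" "1 \<le> j"
    and lam: "young (grow r p i j)" and below: "grow_wf r p (Suc i) j" and right: "grow_wf r p i (Suc j)"
  shows "good_square (Mentry p i j) (grow r p i j) (grow r p (Suc i) j) (grow r p i (Suc j))
           (grow r p (Suc i) (Suc j))"
proof -
  have "Mentry p i j \<noteq> 0 \<Longrightarrow> grow r p (Suc i) j = grow r p i j \<and> grow r p i (Suc j) = grow r p i j"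
    using Mentry_nonzero_free[OF p ij(2)] below right unfolding grow_wf_def by auto
  then show ?thesis
    using good_square_local_rule[OF lam _ _ _ _ Mentry_cases] below right
    unfolding grow_wf_def grow_Suc_Suc[OF ij] by auto
qed

lemma grow_wf_all: "p \<in> signed_perms n \<Longrightarrow> grow_wf r p i j"
proof (induction r p i j rule: grow.induct)
  case (1 r p i j)
  let ?lam = "grow r p (Suc i) (Suc j)" and ?mu = "grow r p (Suc (Suc i)) (Suc j)"
    and ?nu = "grow r p (Suc i) (Suc (Suc j))" and ?m = "Mentry p (Suc i) (Suc j)"
  have below: "grow_wf r p (Suc (Suc i)) (Suc j)" and right: "grow_wf r p (Suc i) (Suc (Suc j))"
    using 1 by blast+
  have "young ?lam" using 1 unfolding grow_wf_def by blast
  then have square: "good_square ?m ?lam ?mu ?nu (grow r p (Suc (Suc i)) (Suc (Suc j)))"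
    using good_square_grow_step[OF "1.prems" _ _ _ below right] by simp
  have "row_free p (Suc i) (Suc (Suc j)) \<Longrightarrow> ?m = 0 \<and> ?mu = ?lam"
    using below unfolding row_free_def grow_wf_def by auto
  moreover have "col_free p (Suc (Suc i)) (Suc j) \<Longrightarrow> ?m = 0 \<and> ?nu = ?lam"
    using right unfolding col_free_def grow_wf_def by auto
  ultimately show ?case
    using square local_rule_unchanged_below[of ?lam ?nu] local_rule_sym[of 0 ?lam ?mu ?lam]
      local_rule_unchanged_below[of ?lam ?mu]
    unfolding grow_wf_def good_square_def by auto
qed (auto simp: grow_wf_def young_staircase domino_step_refl)

lemma young_grow: "p \<in> signed_perms n \<Longrightarrow> young (grow r p i j)"
  using grow_wf_all unfolding grow_wf_def by blast

lemma domino_step_grow_down: "p \<in> signed_perms n \<Longrightarrow> domino_step (grow r p i j) (grow r p (Suc i) j)"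
  using grow_wf_all[of p n r "Suc i" j] unfolding grow_wf_def by simp

lemma domino_step_grow_right: "p \<in> signed_perms n \<Longrightarrow> domino_step (grow r p i j) (grow r p i (Suc j))"
  using grow_wf_all[of p n r i "Suc j"] unfolding grow_wf_def by simp

lemma good_square_grow:
  "p \<in> signed_perms n \<Longrightarrow> 1 \<le> i \<Longrightarrow> 1 \<le> j \<Longrightarrow>
    good_square (Mentry p i j) (grow r p i j) (grow r p (Suc i) j) (grow r p i (Suc j))
      (grow r p (Suc i) (Suc j))"
  using good_square_grow_step young_grow grow_wf_all by blast

lemma involution_cases:
  assumes "is_involution n p" "i \<in> {1..n}"
  obtains "p i = int i" | "p i = - int i"
    | l where "l \<in> {1..n}" "l \<noteq> i" "p i = int l" "p l = int i"
    | l where "l \<in> {1..n}" "l \<noteq> i" "p i = - int l" "p l = - int i"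
  using assms unfolding is_involution_def by blast

lemma involution_swap:
  assumes p: "p \<in> signed_perms n" and inv: "is_involution n p" and j: "1 \<le> j"
  shows "(p i = int j \<longrightarrow> p j = int i) \<and> (p i = - int j \<longrightarrow> p j = - int i)"
proof (cases "p i = 0")
  case False
  then have "i \<in> {1..n}" using p unfolding signed_perms_def by blast
  then show ?thesis using j by (cases rule: involution_cases[OF inv]) auto
qed (use j in auto)

lemma involution_Mentry_sym:
  assumes "p \<in> signed_perms n" "is_involution n p" "1 \<le> i" "1 \<le> j"
  shows "Mentry p i j = Mentry p j i"
proof -
  have "p i = int j \<longleftrightarrow> p j = int i" "p i = - int j \<longleftrightarrow> p j = - int i"
    using involution_swap[OF assms(1,2,3), of j] involution_swap[OF assms(1,2,4), of i] by blast+
  then show ?thesis unfolding Mentry_def by simp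
qed

lemma grow_sym:
  assumes "\<And>i j. 1 \<le> i \<Longrightarrow> 1 \<le> j \<Longrightarrow> Mentry p i j = Mentry p j i"
  shows "grow r p i j = grow r p j i"
  using assms
proof (induction r p i j rule: grow.induct)
  case (1 r p i j)
  have "grow r p (Suc i) (Suc j) = grow r p (Suc j) (Suc i)"
    and "grow r p (Suc (Suc i)) (Suc j) = grow r p (Suc j) (Suc (Suc i))"
    and "grow r p (Suc i) (Suc (Suc j)) = grow r p (Suc (Suc j)) (Suc i)"
    using 1 by blast+
  moreover have "Mentry p (Suc i) (Suc j) = Mentry p (Suc j) (Suc i)" using "1.prems" by simp
  ultimately show ?case by (simp only: grow.simps local_rule_sym)
qed simp_all

section \<open>Counting vertical dominoes\<close>

lemma sum_grid_telescope:
  fixes H V c :: "nat \<Rightarrow> nat \<Rightarrow> 'a::ab_group_add"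
  assumes "1 \<le> a" "1 \<le> b"
    and square: "\<And>i j. 1 \<le> i \<Longrightarrow> i < a \<Longrightarrow> 1 \<le> j \<Longrightarrow> j < b \<Longrightarrow>
      H (Suc i) j - H i j = V i j - V i (Suc j) + c i j"
  shows "(\<Sum>j = 1..<b. H a j) - (\<Sum>j = 1..<b. H 1 j)
    = (\<Sum>i = 1..<a. V i 1) - (\<Sum>i = 1..<a. V i b) + (\<Sum>i = 1..<a. \<Sum>j = 1..<b. c i j)"
proof -
  have row: "(\<Sum>j = 1..<b. V i j - V i (Suc j)) = V i 1 - V i b" for i
  proof -
    have "(\<Sum>j = 1..<b. V i j - V i (Suc j)) = - (\<Sum>j = 1..<b. V i (Suc j) - V i j)"
      by (simp add: sum_negf[symmetric])
    then show ?thesis using sum_Suc_diff'[OF \<open>1 \<le> b\<close>, of "V i"] by simp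
  qed
  have "(\<Sum>j = 1..<b. H a j) - (\<Sum>j = 1..<b. H 1 j)
      = (\<Sum>i = 1..<a. (\<Sum>j = 1..<b. H (Suc i) j) - (\<Sum>j = 1..<b. H i j))"
    using sum_Suc_diff'[OF \<open>1 \<le> a\<close>, of "\<lambda>i. \<Sum>j = 1..<b. H i j"] by simp
  also have "\<dots> = (\<Sum>i = 1..<a. \<Sum>j = 1..<b. V i j - V i (Suc j) + c i j)"
    using square by (simp add: sum_subtractf[symmetric])
  also have "\<dots> = (\<Sum>i = 1..<a. V i 1 - V i b + (\<Sum>j = 1..<b. c i j))"
    by (simp only: sum.distrib row)
  finally show ?thesis by (simp add: sum.distrib sum_subtractf)
qed

lemma vertical_dominoes_last_row:
  assumes p: "p \<in> signed_perms n" and inv: "is_involution n p"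
  shows "(\<Sum>j = 1..<Suc n. vert_even (grow r p (Suc n) j) (grow r p (Suc n) (Suc j)))
       + (\<Sum>j = 1..<Suc n. vert_odd (grow r p (Suc n) j) (grow r p (Suc n) (Suc j)))
       = (\<Sum>i = 1..<Suc n. \<Sum>j = 1..<Suc n. of_bool (Mentry p i j = -1))"
proof -
  let ?H = "\<lambda>i j. vert_even (grow r p i j) (grow r p i (Suc j))"
  let ?V = "\<lambda>i j. vert_odd (grow r p i j) (grow r p (Suc i) j)"
  have "(\<Sum>j = 1..<Suc n. ?H (Suc n) j) - (\<Sum>j = 1..<Suc n. ?H 1 j)
      = (\<Sum>i = 1..<Suc n. ?V i 1) - (\<Sum>i = 1..<Suc n. ?V i (Suc n))
        + (\<Sum>i = 1..<Suc n. \<Sum>j = 1..<Suc n. of_bool (Mentry p i j = -1))"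
  proof (rule sum_grid_telescope)
    fix i j assume "1 \<le> i" "i < Suc n" "1 \<le> j" "j < Suc n"
    then show "?H (Suc i) j - ?H i j = ?V i j - ?V i (Suc j) + of_bool (Mentry p i j = -1)"
      using good_square_grow[OF p, of i j r] unfolding good_square_def square_balanced_def by simp
  qed simp_all
  moreover have "?H 1 j = 0" "?V i 1 = 0" for i j
    using vert_counts_empty by (simp_all add: grow_boundary)
  moreover have "?V i (Suc n) = vert_odd (grow r p (Suc n) i) (grow r p (Suc n) (Suc i))" for i
    using grow_sym[OF involution_Mentry_sym[OF p inv]] by metis
  ultimately show ?thesis by (simp add: algebra_simps)
qed

lemma parity_content_along_row:
  assumes p: "p \<in> signed_perms n" and b: "1 \<le> b"
  shows "parity_content (grow r p a b) - parity_content (staircase r)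
    = 2 * (\<Sum>j = 1..<b. vert_odd (grow r p a j) (grow r p a (Suc j))
                         - vert_even (grow r p a j) (grow r p a (Suc j)))"
proof -
  have "parity_content (grow r p a b) - parity_content (grow r p a 1)
      = (\<Sum>j = 1..<b. parity_content (grow r p a (Suc j)) - parity_content (grow r p a j))"
    using sum_Suc_diff'[OF b, of "\<lambda>j. parity_content (grow r p a j)"] by simp
  also have "\<dots> = (\<Sum>j = 1..<b. 2 * (vert_odd (grow r p a j) (grow r p a (Suc j))
                                     - vert_even (grow r p a j) (grow r p a (Suc j))))"
    using parity_content_step[OF young_finite[OF young_grow[OF p]] domino_step_grow_right[OF p]]
    by simp
  finally show ?thesis by (simp add: grow_boundary sum_distrib_left)
qed

lemma parity_content_diagonal_step:
  assumes p: "p \<in> signed_perms n" and inv: "is_involution n p" and i: "1 \<le> i"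
  shows "parity_content (grow r p (Suc i) (Suc i)) - parity_content (grow r p i i)
    = 2 * of_bool (Mentry p i i = -1)"
proof -
  let ?lam = "grow r p i i" and ?mu = "grow r p (Suc i) i" and ?rho = "grow r p (Suc i) (Suc i)"
  have "grow r p i (Suc i) = ?mu" by (rule grow_sym[OF involution_Mentry_sym[OF p inv]])
  then have square: "good_square (Mentry p i i) ?lam ?mu ?mu ?rho"
    using good_square_grow[OF p i i, of r] by simp
  have "parity_content ?mu - parity_content ?lam = 2 * (vert_odd ?lam ?mu - vert_even ?lam ?mu)"
    by (rule parity_content_step[OF young_finite[OF young_grow[OF p]] domino_step_grow_down[OF p]])
  moreover have "parity_content ?rho - parity_content ?mu = 2 * (vert_odd ?mu ?rho - vert_even ?mu ?rho)"
    using square parity_content_step[OF young_finite[OF young_grow[OF p]]]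
    unfolding good_square_def by blast
  ultimately show ?thesis using square unfolding good_square_def by simp
qed

lemma parity_content_diagonal:
  assumes p: "p \<in> signed_perms n" and inv: "is_involution n p" and a: "1 \<le> a"
  shows "parity_content (grow r p a a) - parity_content (staircase r)
    = 2 * (\<Sum>i = 1..<a. of_bool (Mentry p i i = -1))"
proof -
  have "parity_content (grow r p a a) - parity_content (grow r p 1 1)
      = (\<Sum>i = 1..<a. parity_content (grow r p (Suc i) (Suc i)) - parity_content (grow r p i i))"
    using sum_Suc_diff'[OF a, of "\<lambda>i. parity_content (grow r p i i)"] by simp
  also have "\<dots> = (\<Sum>i = 1..<a. 2 * of_bool (Mentry p i i = -1))"
    using parity_content_diagonal_step[OF p inv] by simp
  finally show ?thesis by (simp add: grow_boundary sum_distrib_left)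
qed

lemma sum_negative_entries:
  assumes p: "p \<in> signed_perms n"
  shows "(\<Sum>i = 1..<Suc n. \<Sum>j = 1..<Suc n. of_bool (Mentry p i j = -1)) = int (card {i\<in>{1..n}. p i < 0})"
proof -
  have range: "nat \<bar>p i\<bar> \<in> {1..n}" if "i \<in> {1..n}" for i
    using p that unfolding signed_perms_def bij_betw_def by blast
  have "(\<Sum>j = 1..<Suc n. of_bool (Mentry p i j = -1)) = (of_bool (p i < 0) :: int)"
    if "i \<in> {1..<Suc n}" for i
  proof -
    have "(\<Sum>j = 1..<Suc n. of_bool (Mentry p i j = -1))
        = int (card ({1..<Suc n} \<inter> {j. Mentry p i j = -1}))"
      by (rule sum_of_bool_eq) simp_all
    also have "{1..<Suc n} \<inter> {j. Mentry p i j = -1} = (if p i < 0 then {nat \<bar>p i\<bar>} else {})"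
      using range[of i] that by (auto simp: Mentry_def)
    finally show ?thesis by simp
  qed
  then have "(\<Sum>i = 1..<Suc n. \<Sum>j = 1..<Suc n. of_bool (Mentry p i j = -1))
      = (\<Sum>i = 1..<Suc n. (of_bool (p i < 0) :: int))"
    by (rule sum.cong[OF refl])
  also have "\<dots> = int (card {i\<in>{1..n}. p i < 0})"
    by (simp add: atLeastLessThanSuc_atLeastAtMost Int_def)
  finally show ?thesis .
qed

lemma card_negative_letters:
  assumes inv: "is_involution n p"
  shows "card {i\<in>{1..n}. p i < 0} = barred_fixed_points n p + 2 * barred_two_cycles n p"
proof -
  define F where "F = {k\<in>{1..n}. p k = - int k}"
  define P where "P = {{k, l} | k l. k \<in> {1..n} \<and> l \<in> {1..n} \<and> k \<noteq> l
      \<and> p k = - int l \<and> p l = - int k}"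
  have pair: "A = {x, nat (- p x)}" if "A \<in> P" "x \<in> A" for A x
  proof -
    obtain k l where "A = {k, l}" "p k = - int l" "p l = - int k"
      using \<open>A \<in> P\<close> unfolding P_def by blast
    then show ?thesis using \<open>x \<in> A\<close> by (auto simp: insert_commute)
  qed
  have negatives: "{i\<in>{1..n}. p i < 0} = F \<union> \<Union>P"
  proof (intro equalityI subsetI)
    fix k assume k: "k \<in> {i\<in>{1..n}. p i < 0}"
    show "k \<in> F \<union> \<Union>P"
    proof (cases "p k = - int k")
      case False
      with k inv obtain l where l: "l \<in> {1..n}" "l \<noteq> k" "p k = - int l" "p l = - int k"
        unfolding is_involution_def by fastforce
      then have "{k, l} \<in> P"
        unfolding P_def using k by (intro CollectI exI[of _ k] exI[of _ l]) simp
      then show ?thesis by blast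
    qed (use k in \<open>simp add: F_def\<close>)
  next
    fix x assume "x \<in> F \<union> \<Union>P"
    then show "x \<in> {i\<in>{1..n}. p i < 0}"
    proof
      assume "x \<in> \<Union>P"
      then obtain k l where "x \<in> {k, l}" "k \<in> {1..n}" "l \<in> {1..n}" "p k = - int l" "p l = - int k"
        unfolding P_def by blast
      then show ?thesis by auto
    qed (simp add: F_def)
  qed
  have "\<Union>P \<subseteq> {1..n}" unfolding P_def by auto
  then have "finite (\<Union>P)" by (rule finite_subset) simp
  have "2 * card P = card (\<Union>P)"
  proof (rule card_partition)
    show "finite P" using \<open>finite (\<Union>P)\<close> by (rule finite_UnionD)
    show "card c = 2" if "c \<in> P" for c using that unfolding P_def by auto
    show "c1 \<inter> c2 = {}" if "c1 \<in> P" "c2 \<in> P" "c1 \<noteq> c2" for c1 c2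
    proof (rule ccontr)
      assume "c1 \<inter> c2 \<noteq> {}"
      then obtain x where "x \<in> c1" "x \<in> c2" by blast
      then have "c1 = c2" using pair that(1,2) by metis
      then show False using that(3) by simp
    qed
  qed fact
  moreover have "F \<inter> \<Union>P = {}" unfolding F_def P_def by auto
  ultimately have "card (F \<union> \<Union>P) = card F + 2 * card P"
    using \<open>finite (\<Union>P)\<close> by (simp add: card_Un_disjoint F_def)
  then show ?thesis
    unfolding negatives barred_fixed_points_def barred_two_cycles_def F_def P_def by simp
qed

lemma sum_barred_diagonal:
  "(\<Sum>i = 1..<Suc n. of_bool (Mentry p i i = -1)) = int (barred_fixed_points n p)"
proof -
  have "(\<Sum>i = 1..<Suc n. of_bool (Mentry p i i = -1))
      = int (card ({1..<Suc n} \<inter> {i. Mentry p i i = -1}))"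
    by (rule sum_of_bool_eq) simp_all
  also have "{1..<Suc n} \<inter> {i. Mentry p i i = -1} = {k\<in>{1..n}. p k = - int k}"
    by (auto simp: Mentry_def)
  finally show ?thesis by (simp add: barred_fixed_points_def)
qed

lemma Pd_vertical_count:
  "int (card {k. 0 < k \<and> k < length (Pd r n p) \<and> P (Pd r n p ! k - Pd r n p ! (k - 1))})
    = (\<Sum>j = 1..<Suc n. of_bool (P (grow r p (Suc n) (Suc j) - grow r p (Suc n) j)))"
proof -
  have "{k. 0 < k \<and> k < length (Pd r n p) \<and> P (Pd r n p ! k - Pd r n p ! (k - 1))}
      = {1..<Suc n} \<inter> {j. P (grow r p (Suc n) (Suc j) - grow r p (Suc n) j)}"
    by (auto simp: Pd_def nth_append simp del: upt_Suc)
  moreover have "(\<Sum>j = 1..<Suc n. of_bool (P (grow r p (Suc n) (Suc j) - grow r p (Suc n) j)))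
      = int (card ({1..<Suc n} \<inter> {j. P (grow r p (Suc n) (Suc j) - grow r p (Suc n) j)}))"
    by (rule sum_of_bool_eq) simp_all
  ultimately show ?thesis by simp
qed

theorem corollary3p11:
  fixes r n :: nat and p :: "nat \<Rightarrow> int"
  assumes "p \<in> signed_perms n"
    and "is_involution n p"
  shows "ev (Pd r n p) = barred_two_cycles n p
       \<and> ov (Pd r n p) = barred_fixed_points n p + barred_two_cycles n p"
proof -
  note p = assms(1) and inv = assms(2)
  define evens where "evens = (\<Sum>j = 1..<Suc n. vert_even (grow r p (Suc n) j) (grow r p (Suc n) (Suc j)))"
  define odds where "odds = (\<Sum>j = 1..<Suc n. vert_odd (grow r p (Suc n) j) (grow r p (Suc n) (Suc j)))"
  have "int (ev (Pd r n p)) = evens"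
    unfolding evens_def ev_def vert_even_def by (rule Pd_vertical_count)
  moreover have "int (ov (Pd r n p)) = odds"
    unfolding odds_def ov_def vert_odd_def by (rule Pd_vertical_count)
  moreover have "evens + odds = int (barred_fixed_points n p) + 2 * int (barred_two_cycles n p)"
    using vertical_dominoes_last_row[OF p inv, of r] sum_negative_entries[OF p]
      card_negative_letters[OF inv]
    unfolding evens_def odds_def by simp
  moreover have "odds - evens = int (barred_fixed_points n p)"
    using parity_content_along_row[OF p, of "Suc n" r "Suc n"]
      parity_content_diagonal[OF p inv, of "Suc n" r] sum_barred_diagonal
    unfolding evens_def odds_def by (simp add: sum_subtractf)
  ultimately have "int (ev (Pd r n p)) = int (barred_two_cycles n p)"
    and "int (ov (Pd r n p)) = int (barred_fixed_points n p + barred_two_cycles n p)"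
    by linarith+
  then show ?thesis by simp
qed

end
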